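(* Let $G=(V,E)$ with weights $w^\pm$ be as in the context, and let $P_0,N_0\subseteq V$ be disjoint. The joint distribution of the pair (final +active set, final -active set) produced by the CLT process with seeds $(P_0,N_0)$ is identical to the joint distribution of the pair (set of +active nodes, set of -active nodes) defined by distances in the random live-path graph $G_X$.
   Context: Weights: $G=(V,E)$ finite directed graph, each edge $(u,v)$ has weights $w^+_{uv},w^-_{uv}\ge 0$, with $w^\pm_{uv}=0$ for non-edges and $\sum_u w^+_{uv}\le1$, $\sum_u w^-_{uv}\le 1$ for all $v$. Seeds $P_0,N_0$ are disjoint. CLT process (two independent LT diffusions with negative dominance). Each node $v$ draws $\theta^+_v,\theta^-_v$ independently and uniformly from $[0,1]$. The positive diffusion is the LT process $R^+_0=P_0$, $R^+_t=R^+_{t-1}\cup\{v:\sum_{u\in R^+_{t-1}}w^+_{uv}\ge\theta^+_v\}$, and $\tau^+(v)=\min\{t: v\in R^+_t\}$ ($=\infty$ if no such $t$). The negative diffusion is defined identically from $N_0$, $w^-$, $\theta^-$, giving $\tau^-(v)$. A node $v$ is finally -active iff $\tau^-(v)<\infty$ and $\tau^-(v)\le\tau^+(v)$, and finally +active iff $\tau^+(v)<\infty$ and $\tau^+(v)<\tau^-(v)$. Random live-path graph $G_X$: independently for each $v\in V$, select at most one positive in-edge, choosing $(u,v)$ with probability $w^+_{uv}$ and no positive in-edge with probability $1-\sum_u w^+_{uv}$; independently, select at most one negative in-edge in the same way using $w^-$. Let $G^+$ (resp. $G^-$) be the graph on $V$ with the selected positive (resp. negative) edges. For $A\subseteq V$,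 $d_{G^+}(A,v)$ is the length of a shortest directed path in $G^+$ from a node of $A$ to $v$ ($0$ if $v\in A$, $\infty$ if none); $d_{G^-}(A,v)$ similarly. In $G_X$, $v$ is +active iff $d_{G^+}(P_0,v)<\infty$ and $d_{G^+}(P_0,v)<d_{G^-}(N_0,v)$, and -active iff $d_{G^-}(N_0,v)<\infty$ and $d_{G^-}(N_0,v)\le d_{G^+}(P_0,v)$. *)

theory Defs
  imports "HOL-Probability.Probability"
begin

text \<open>Vertices are the elements of a finite type 'v (V = UNIV). A weight function
  w :: 'v => 'v => real gives w u v = weight of the edge (u,v).\<close>

fun lt_set :: "('v::finite \<Rightarrow> 'v \<Rightarrow> real) \<Rightarrow> ('v \<Rightarrow> real) \<Rightarrow> 'v set \<Rightarrow> nat \<Rightarrow> 'v set" where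
  "lt_set w \<theta> S 0 = S"
| "lt_set w \<theta> S (Suc t) = lt_set w \<theta> S t \<union> {v. (\<Sum>u\<in>lt_set w \<theta> S t. w u v) \<ge> \<theta> v}"

definition act_time :: "('v::finite \<Rightarrow> 'v \<Rightarrow> real) \<Rightarrow> ('v \<Rightarrow> real) \<Rightarrow> 'v set \<Rightarrow> 'v \<Rightarrow> enat" where
  "act_time w \<theta> S v = (INF t\<in>{t. v \<in> lt_set w \<theta> S t}. enat t)"

definition clt_outcome ::
  "('v::finite \<Rightarrow> 'v \<Rightarrow> real) \<Rightarrow> ('v \<Rightarrow> 'v \<Rightarrow> real) \<Rightarrow> 'v set \<Rightarrow> 'v set
   \<Rightarrow> ('v \<Rightarrow> real) \<Rightarrow> ('v \<Rightarrow> real) \<Rightarrow> 'v set \<times> 'v set" where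
  "clt_outcome wp wn P0 N0 \<theta>p \<theta>n =
     ({v. act_time wp \<theta>p P0 v < \<infinity> \<and> act_time wp \<theta>p P0 v < act_time wn \<theta>n N0 v},
      {v. act_time wn \<theta>n N0 v < \<infinity> \<and> act_time wn \<theta>n N0 v \<le> act_time wp \<theta>p P0 v})"

definition threshold_space :: "('v::finite \<Rightarrow> real) measure" where
  "threshold_space = PiM UNIV (\<lambda>_. uniform_measure lborel {0..1::real})"

text \<open>A selection x :: 'v => 'v option picks for each node v at most one in-edge
  (x v = Some u means edge (u,v) is selected).\<close>
definition sel_pmf :: "('v::finite \<Rightarrow> 'v \<Rightarrow> real) \<Rightarrow> 'v \<Rightarrow> 'v option pmf" where
  "sel_pmf w v = embed_pmf (\<lambda>c. case c of None \<Rightarrow> 1 - (\<Sum>u\<in>UNIV. w u v) | Some u \<Rightarrow> w u v)"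

definition live_pmf :: "('v::finite \<Rightarrow> 'v \<Rightarrow> real) \<Rightarrow> ('v \<Rightarrow> 'v option) pmf" where
  "live_pmf w = Pi_pmf UNIV None (sel_pmf w)"

definition live_edges :: "('v \<Rightarrow> 'v option) \<Rightarrow> ('v \<times> 'v) set" where
  "live_edges x = {(u, v). x v = Some u}"

definition live_dist :: "('v \<Rightarrow> 'v option) \<Rightarrow> 'v set \<Rightarrow> 'v \<Rightarrow> enat" where
  "live_dist x A v = (INF k\<in>{k. \<exists>u\<in>A. (u, v) \<in> live_edges x ^^ k}. enat k)"

definition live_outcome ::
  "'v set \<Rightarrow> 'v set \<Rightarrow> ('v \<Rightarrow> 'v option) \<Rightarrow> ('v \<Rightarrow> 'v option) \<Rightarrow> 'v set \<times> 'v set" where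
  "live_outcome P0 N0 xp xn =
     ({v. live_dist xp P0 v < \<infinity> \<and> live_dist xp P0 v < live_dist xn N0 v},
      {v. live_dist xn N0 v < \<infinity> \<and> live_dist xn N0 v \<le> live_dist xp P0 v})"

end

theory Submission
  imports Defs
begin

(* Both sides of the theorem are the image of a pair of "time profiles" under the same
   map: in the CLT process the profiles are the activation times of the two independent
   LT diffusions, in the live-path model the distances from the seeds in the two
   independent selections of in-edges.  It therefore suffices to show that, for a single
   diffusion, the activation-time profile and the distance profile have the same law.

   For a fixed candidate profile f both events factorise over the nodes:
   act_time = f holds iff every threshold theta v lies in an interval (its
   "threshold window"), and live_dist = f holds iff every selected in-edge x v lies in a
   set of admissible parents (its "parent window").  Node by node, the uniform measure of
   the threshold window equals the selection probability of the parent window.  Since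
   thresholds and selections are independent across nodes, the profile laws agree; the
   joint statement follows by independence of the two diffusions. *)

lemma INF_enat_Least:
  fixes K :: "nat set"
  assumes "K \<noteq> {}"
  shows "(INF k\<in>K. enat k) = enat (LEAST k. k \<in> K)"
proof (rule antisym)
  have "(LEAST k. k \<in> K) \<in> K" using assms by (auto intro: LeastI)
  then show "(INF k\<in>K. enat k) \<le> enat (LEAST k. k \<in> K)" by (rule INF_lower)
  show "enat (LEAST k. k \<in> K) \<le> (INF k\<in>K. enat k)" by (rule INF_greatest) (auto intro: Least_le)
qed

lemma INF_enat_le_iff:
  fixes K :: "nat set"
  shows "(INF k\<in>K. enat k) \<le> enat t \<longleftrightarrow> (\<exists>k\<in>K. k \<le> t)"
proof (cases "K = {}")
  case True
  then show ?thesis by (simp add: top_enat_def)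
next
  case False
  then have "(LEAST k. k \<in> K) \<in> K" by (auto intro: LeastI)
  then show ?thesis using INF_enat_Least[OF False] by (auto dest: Least_le)
qed

lemma INF_enat_Suc:
  fixes K :: "nat set"
  shows "(INF k\<in>Suc ` K. enat k) = eSuc (INF k\<in>K. enat k)"
proof (cases "K = {}")
  case True
  then show ?thesis by (simp add: top_enat_def)
next
  case False
  have "(LEAST k. k \<in> K) \<in> K" using False by (auto intro: LeastI)
  then have "(LEAST k. k \<in> Suc ` K) = Suc (LEAST k. k \<in> K)"
    by (intro Least_equality) (auto intro: Least_le)
  then show ?thesis using INF_enat_Least[OF False] INF_enat_Least[of "Suc ` K"] False
    by (simp add: eSuc_enat)
qed

lemma enat_eq_by_le:
  fixes a b :: enat
  assumes "\<And>t. a \<le> enat t \<longleftrightarrow> b \<le> enat t"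
  shows "a = b"
proof (cases a; cases b)
  fix n m assume "a = enat n" "b = enat m"
  then show "a = b" using assms[of n] assms[of m] by auto
qed (use assms in \<open>auto dest: spec[of _ 0] simp: enat_0_iff\<close>)

lemma eSuc_eq_infinity_iff: "eSuc x = \<infinity> \<longleftrightarrow> x = \<infinity>"
  by (metis eSuc_infinity eSuc_inject)

subsection \<open>Activation times of a linear threshold diffusion\<close>

lemma lt_set_mono: "t \<le> t' \<Longrightarrow> lt_set w \<theta> S t \<subseteq> lt_set w \<theta> S t'"
  by (induction t' rule: dec_induct) auto

lemma lt_set_iff_act_time: "v \<in> lt_set w \<theta> S t \<longleftrightarrow> act_time w \<theta> S v \<le> enat t"
  unfolding act_time_def INF_enat_le_iff using lt_set_mono by blast

lemma act_time_profile_iff_layers: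
  "(\<lambda>v. act_time w \<theta> S v) = f \<longleftrightarrow> (\<forall>t. lt_set w \<theta> S t = {u. f u \<le> enat t})"
proof
  assume "(\<lambda>v. act_time w \<theta> S v) = f"
  then show "\<forall>t. lt_set w \<theta> S t = {u. f u \<le> enat t}" by (auto simp: lt_set_iff_act_time)
next
  assume "\<forall>t. lt_set w \<theta> S t = {u. f u \<le> enat t}"
  then show "(\<lambda>v. act_time w \<theta> S v) = f"
    by (auto intro!: enat_eq_by_le simp: lt_set_iff_act_time[symmetric])
qed

lemma lt_set_eq_iff:
  "lt_set w \<theta> S = L \<longleftrightarrow> L 0 = S \<and> (\<forall>t. L (Suc t) = L t \<union> {v. \<theta> v \<le> (\<Sum>u\<in>L t. w u v)})"
proof
  assume "L 0 = S \<and> (\<forall>t. L (Suc t) = L t \<union> {v. \<theta> v \<le> (\<Sum>u\<in>L t. w u v)})"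
  then have "lt_set w \<theta> S t = L t" for t by (induction t) auto
  then show "lt_set w \<theta> S = L" ..
qed auto

definition reached_weight :: "('v::finite \<Rightarrow> 'v \<Rightarrow> real) \<Rightarrow> ('v \<Rightarrow> enat) \<Rightarrow> 'v \<Rightarrow> nat \<Rightarrow> real" where
  "reached_weight w f v t = (\<Sum>u | f u \<le> enat t. w u v)"

lemma reached_weight_0: "reached_weight w f v 0 = (\<Sum>u | f u = 0. w u v)"
  by (simp add: reached_weight_def zero_enat_def[symmetric])

lemma reached_weight_Suc:
  "reached_weight w f v (Suc m) = reached_weight w f v m + (\<Sum>u | f u = enat (Suc m). w u v)"
proof -
  have "f u \<le> enat (Suc m) \<longleftrightarrow> f u \<le> enat m \<or> f u = enat (Suc m)" for u
    by (cases "f u") auto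
  then have "{u. f u \<le> enat (Suc m)} = {u. f u \<le> enat m} \<union> {u. f u = enat (Suc m)}"
    by auto
  then show ?thesis
    unfolding reached_weight_def by (subst sum.union_disjoint[symmetric]) auto
qed

lemma reached_weight_mono:
  assumes "\<And>u v. w u v \<ge> 0"
  shows "mono (reached_weight w f v)"
  unfolding reached_weight_def
  by (intro monoI sum_mono2) (use assms in \<open>auto intro: order_trans\<close>)

lemma reached_weight_le_finite_weight:
  assumes "\<And>u v. w u v \<ge> 0"
  shows "reached_weight w f v t \<le> (\<Sum>u | f u < \<infinity>. w u v)"
  unfolding reached_weight_def
  by (intro sum_mono2) (use assms in \<open>auto dest: enat_ile\<close>)

lemma finite_values_bounded:
  fixes f :: "'v::finite \<Rightarrow> enat"
  obtains N where "\<And>u. f u < \<infinity> \<longleftrightarrow> f u \<le> enat N"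
proof -
  have "finite (the_enat ` range f)" by simp
  then obtain N where "\<forall>n\<in>the_enat ` range f. n \<le> N"
    using finite_nat_set_iff_bounded_le by blast
  then have N: "the_enat (f u) \<le> N" for u by blast
  have "f u < \<infinity> \<longleftrightarrow> f u \<le> enat N" for u
    using N[of u] by (cases "f u") auto
  then show ?thesis by (rule that)
qed

lemma reached_weight_attains_finite_weight:
  obtains N where "reached_weight w f v N = (\<Sum>u | f u < \<infinity>. w u v)"
proof -
  obtain N where "\<And>u. f u < \<infinity> \<longleftrightarrow> f u \<le> enat N" using finite_values_bounded[of f] by metis
  then have "reached_weight w f v N = (\<Sum>u | f u < \<infinity>. w u v)"
    by (simp add: reached_weight_def)
  then show ?thesis by (rule that)
qed

lemma act_time_profile_iff_steps:
  "(\<lambda>v. act_time w \<theta> S v) = f \<longleftrightarrow>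
     (\<forall>v. (v \<in> S \<longleftrightarrow> f v = 0) \<and>
          (\<forall>t. f v \<le> enat (Suc t) \<longleftrightarrow> f v \<le> enat t \<or> \<theta> v \<le> reached_weight w f v t))"
  (is "_ \<longleftrightarrow> ?rhs")
proof -
  have "(\<forall>t. lt_set w \<theta> S t = {u. f u \<le> enat t}) \<longleftrightarrow> lt_set w \<theta> S = (\<lambda>t. {u. f u \<le> enat t})"
    by (simp add: fun_eq_iff)
  also have "\<dots> \<longleftrightarrow> {u. f u \<le> enat 0} = S \<and>
      (\<forall>t. {u. f u \<le> enat (Suc t)} = {u. f u \<le> enat t} \<union> {v. \<theta> v \<le> reached_weight w f v t})"
    unfolding lt_set_eq_iff reached_weight_def by simp
  also have "\<dots> \<longleftrightarrow> ?rhs"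
    by (auto simp: set_eq_iff zero_enat_def[symmetric])
  finally show ?thesis unfolding act_time_profile_iff_layers .
qed

(* The thresholds under which a node with reached weights a (eventually A) becomes
   active exactly at time e: any threshold for e = 0, (a(e-2), a(e-1)] for e >= 1,
   and (A, inf) if the node is never activated. *)
definition arrival_window :: "(nat \<Rightarrow> real) \<Rightarrow> real \<Rightarrow> enat \<Rightarrow> real set" where
  "arrival_window a A e = (case e of
      enat 0 \<Rightarrow> UNIV
    | enat (Suc 0) \<Rightarrow> {..a 0}
    | enat (Suc (Suc m)) \<Rightarrow> {a m<..a (Suc m)}
    | \<infinity> \<Rightarrow> {A<..})"

lemma step_condition_iff_arrival_window:
  fixes a :: "nat \<Rightarrow> real"
  assumes mono: "mono a" and bounded: "\<And>t. a t \<le> A" and attained: "a N = A"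
  shows "(\<forall>t. e \<le> enat (Suc t) \<longleftrightarrow> e \<le> enat t \<or> \<theta> \<le> a t) \<longleftrightarrow> \<theta> \<in> arrival_window a A e"
proof (cases e)
  case infinity
  have "(\<forall>t. \<not> \<theta> \<le> a t) \<longleftrightarrow> A < \<theta>"
    using bounded attained by (auto simp: not_le intro: le_less_trans)
  then show ?thesis using infinity by (simp add: arrival_window_def)
next
  case (enat n)
  consider "n = 0" | "n = Suc 0" | m where "n = Suc (Suc m)"
    by (metis not0_implies_Suc)
  then show ?thesis
  proof cases
    case 3
    have "(\<forall>t. Suc m \<le> t \<longleftrightarrow> Suc (Suc m) \<le> t \<or> \<theta> \<le> a t) \<longleftrightarrow> a m < \<theta> \<and> \<theta> \<le> a (Suc m)"
    proof
      assume "\<forall>t. Suc m \<le> t \<longleftrightarrow> Suc (Suc m) \<le> t \<or> \<theta> \<le> a t"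
      from this[rule_format, of m] this[rule_format, of "Suc m"]
      show "a m < \<theta> \<and> \<theta> \<le> a (Suc m)" by auto
    next
      assume window: "a m < \<theta> \<and> \<theta> \<le> a (Suc m)"
      show "\<forall>t. Suc m \<le> t \<longleftrightarrow> Suc (Suc m) \<le> t \<or> \<theta> \<le> a t"
      proof
        fix t
        consider "t \<le> m" | "t = Suc m" | "Suc (Suc m) \<le> t" by linarith
        then show "Suc m \<le> t \<longleftrightarrow> Suc (Suc m) \<le> t \<or> \<theta> \<le> a t"
        proof cases
          case 1
          then show ?thesis using monoD[OF mono 1] window by auto
        qed (use window in auto)
      qed
    qed
    then show ?thesis using enat 3 by (simp add: arrival_window_def)
  next
    case 2
    have "(\<forall>t. Suc 0 \<le> t \<or> \<theta> \<le> a t) \<longleftrightarrow> \<theta> \<le> a 0"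
      by (metis le_zero_eq not_less_eq_eq)
    then show ?thesis using enat 2 by (simp add: arrival_window_def)
  qed (simp add: enat arrival_window_def)
qed

definition threshold_window :: "('v::finite \<Rightarrow> 'v \<Rightarrow> real) \<Rightarrow> 'v set \<Rightarrow> ('v \<Rightarrow> enat) \<Rightarrow> 'v \<Rightarrow> real set" where
  "threshold_window w S f v =
     (if v \<in> S \<longleftrightarrow> f v = 0
      then arrival_window (reached_weight w f v) (\<Sum>u | f u < \<infinity>. w u v) (f v) else {})"

lemma act_time_profile_iff:
  assumes "\<And>u v. w u v \<ge> 0"
  shows "(\<lambda>v. act_time w \<theta> S v) = f \<longleftrightarrow> (\<forall>v. \<theta> v \<in> threshold_window w S f v)"
proof -
  have step: "(\<forall>t. f v \<le> enat (Suc t) \<longleftrightarrow> f v \<le> enat t \<or> \<theta> v \<le> reached_weight w f v t)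
        \<longleftrightarrow> \<theta> v \<in> arrival_window (reached_weight w f v) (\<Sum>u | f u < \<infinity>. w u v) (f v)" for v
  proof -
    obtain N where "reached_weight w f v N = (\<Sum>u | f u < \<infinity>. w u v)"
      by (rule reached_weight_attains_finite_weight)
    then show ?thesis
      by (intro step_condition_iff_arrival_window reached_weight_mono reached_weight_le_finite_weight assms)
  qed
  then show ?thesis
    unfolding act_time_profile_iff_steps threshold_window_def by (simp add: step) blast
qed

subsection \<open>Distances in the live-edge graph\<close>

lemma live_paths_step:
  assumes "v \<notin> A"
  shows "{k. \<exists>u\<in>A. (u, v) \<in> live_edges x ^^ k} =
    (case x v of None \<Rightarrow> {} | Some y \<Rightarrow> Suc ` {k. \<exists>u\<in>A. (u, y) \<in> live_edges x ^^ k})"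
proof (intro set_eqI iffI)
  fix k assume "k \<in> {k. \<exists>u\<in>A. (u, v) \<in> live_edges x ^^ k}"
  then obtain u where u: "u \<in> A" "(u, v) \<in> live_edges x ^^ k" by blast
  with assms obtain m where "k = Suc m" by (cases k) auto
  with u obtain y where "(u, y) \<in> live_edges x ^^ m" "(y, v) \<in> live_edges x" by auto
  then show "k \<in> (case x v of None \<Rightarrow> {} | Some y \<Rightarrow> Suc ` {k. \<exists>u\<in>A. (u, y) \<in> live_edges x ^^ k})"
    using u \<open>k = Suc m\<close> by (auto simp: live_edges_def)
next
  fix k assume "k \<in> (case x v of None \<Rightarrow> {} | Some y \<Rightarrow> Suc ` {k. \<exists>u\<in>A. (u, y) \<in> live_edges x ^^ k})"
  then obtain y m u where "x v = Some y" "k = Suc m" "u \<in> A" "(u, y) \<in> live_edges x ^^ m"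
    by (auto split: option.splits)
  then show "k \<in> {k. \<exists>u\<in>A. (u, v) \<in> live_edges x ^^ k}"
    by (auto simp: live_edges_def)
qed

definition dist_equation :: "('v \<Rightarrow> 'v option) \<Rightarrow> 'v set \<Rightarrow> ('v \<Rightarrow> enat) \<Rightarrow> bool" where
  "dist_equation x S g \<longleftrightarrow>
     (\<forall>v. g v = (if v \<in> S then 0 else case x v of None \<Rightarrow> \<infinity> | Some y \<Rightarrow> eSuc (g y)))"

lemma live_dist_solves_dist_equation: "dist_equation x S (\<lambda>v. live_dist x S v)"
  unfolding dist_equation_def
proof (intro allI)
  fix v
  show "live_dist x S v =
    (if v \<in> S then 0 else case x v of None \<Rightarrow> \<infinity> | Some y \<Rightarrow> eSuc (live_dist x S y))"
  proof (cases "v \<in> S")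
    case True
    then have "live_dist x S v \<le> enat 0"
      unfolding live_dist_def by (intro INF_lower) auto
    then show ?thesis using True by (simp add: zero_enat_def[symmetric])
  next
    case False
    then show ?thesis
      unfolding live_dist_def live_paths_step[OF False]
      by (cases "x v") (simp_all add: INF_enat_Suc top_enat_def)
  qed
qed

lemma dist_equationD:
  "dist_equation x S g \<Longrightarrow> g v = (if v \<in> S then 0 else case x v of None \<Rightarrow> \<infinity> | Some y \<Rightarrow> eSuc (g y))"
  unfolding dist_equation_def by blast

lemma dist_equation_same_finite_values:
  assumes "dist_equation x S g1" "dist_equation x S g2"
  shows "g1 v = enat n \<Longrightarrow> g2 v = enat n"
proof (induction n arbitrary: v)
  case 0
  have "v \<in> S"
  proof (rule ccontr)
    assume "v \<notin> S"
    then have "g1 v = (case x v of None \<Rightarrow> \<infinity> | Some y \<Rightarrow> eSuc (g1 y))"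
      using dist_equationD[OF assms(1), of v] by simp
    with 0 show False by (cases "x v") (simp_all add: zero_enat_def[symmetric])
  qed
  then show ?case using dist_equationD[OF assms(2), of v] by (simp add: zero_enat_def)
next
  case (Suc m)
  have "v \<notin> S" using Suc.prems dist_equationD[OF assms(1), of v] by (auto simp: zero_enat_def)
  then have eq1: "g1 v = (case x v of None \<Rightarrow> \<infinity> | Some y \<Rightarrow> eSuc (g1 y))"
    and eq2: "g2 v = (case x v of None \<Rightarrow> \<infinity> | Some y \<Rightarrow> eSuc (g2 y))"
    using dist_equationD[OF assms(1), of v] dist_equationD[OF assms(2), of v] by simp_all
  with Suc.prems obtain y where y: "x v = Some y" "eSuc (g1 y) = enat (Suc m)"
    by (cases "x v") auto
  then have "g1 y = enat m" by (cases "g1 y") (auto simp: eSuc_enat)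
  then show ?case using Suc.IH eq2 y by (simp add: eSuc_enat)
qed

lemma dist_equation_unique:
  assumes "dist_equation x S g1" "dist_equation x S g2"
  shows "g1 = g2"
proof
  fix v
  show "g1 v = g2 v"
  proof (cases "g1 v")
    case (enat n)
    then show ?thesis using dist_equation_same_finite_values[OF assms] by simp
  next
    case infinity
    then show ?thesis using dist_equation_same_finite_values[OF assms(2,1), of v]
      by (cases "g2 v") auto
  qed
qed

definition parent_choices :: "('v \<Rightarrow> enat) \<Rightarrow> enat \<Rightarrow> 'v option set" where
  "parent_choices f e =
     (if e = 0 then UNIV else Some ` {u. eSuc (f u) = e} \<union> (if e = \<infinity> then {None} else {}))"

definition parent_window :: "'v set \<Rightarrow> ('v \<Rightarrow> enat) \<Rightarrow> 'v \<Rightarrow> 'v option set" where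
  "parent_window S f v = (if v \<in> S \<longleftrightarrow> f v = 0 then parent_choices f (f v) else {})"

lemma dist_equation_at_iff_parent_window:
  "f v = (if v \<in> S then 0 else case x v of None \<Rightarrow> \<infinity> | Some y \<Rightarrow> eSuc (f y))
    \<longleftrightarrow> x v \<in> parent_window S f v"
  by (cases "x v") (auto simp: parent_window_def parent_choices_def)

lemma live_dist_profile_iff:
  "(\<lambda>v. live_dist x S v) = f \<longleftrightarrow> (\<forall>v. x v \<in> parent_window S f v)"
proof -
  have "(\<lambda>v. live_dist x S v) = f \<longleftrightarrow> dist_equation x S f"
    using live_dist_solves_dist_equation dist_equation_unique by metis
  then show ?thesis
    unfolding dist_equation_def dist_equation_at_iff_parent_window by simp
qed

subsection \<open>The two windows have equal probability\<close>

lemma sum_option_UNIV: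
  fixes g :: "'v::finite option \<Rightarrow> real"
  shows "(\<Sum>c\<in>UNIV. g c) = g None + (\<Sum>u\<in>UNIV. g (Some u))"
proof -
  have "(\<Sum>c\<in>UNIV. g c) = (\<Sum>c\<in>insert None (Some ` UNIV). g c)"
    by (simp only: UNIV_option_conv)
  also have "\<dots> = g None + (\<Sum>u\<in>UNIV. g (Some u))"
    by (simp add: sum.reindex)
  finally show ?thesis .
qed

lemma pmf_sel_pmf:
  fixes w :: "'v::finite \<Rightarrow> 'v \<Rightarrow> real"
  assumes nonneg: "\<And>u v. w u v \<ge> 0" and sub_stochastic: "\<And>v. (\<Sum>u\<in>UNIV. w u v) \<le> 1"
  shows "pmf (sel_pmf w v) c = (case c of None \<Rightarrow> 1 - (\<Sum>u\<in>UNIV. w u v) | Some u \<Rightarrow> w u v)"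
  unfolding sel_pmf_def
proof (rule pmf_embed_pmf)
  let ?g = "\<lambda>c::'v option. case c of None \<Rightarrow> 1 - (\<Sum>u\<in>UNIV. w u v) | Some u \<Rightarrow> w u v"
  show "0 \<le> ?g c" for c
    using nonneg sub_stochastic[of v] by (cases c) auto
  then have "(\<integral>\<^sup>+c. ennreal (?g c) \<partial>count_space UNIV) = ennreal (\<Sum>c\<in>UNIV. ?g c)"
    by (simp add: nn_integral_count_space_finite sum_ennreal)
  also have "(\<Sum>c\<in>UNIV. ?g c) = 1"
    by (simp add: sum_option_UNIV)
  finally show "(\<integral>\<^sup>+c. ennreal (?g c) \<partial>count_space UNIV) = 1" by simp
qed

lemma measure_sel_pmf:
  fixes w :: "'v::finite \<Rightarrow> 'v \<Rightarrow> real"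
  assumes nonneg: "\<And>u v. w u v \<ge> 0" and sub_stochastic: "\<And>v. (\<Sum>u\<in>UNIV. w u v) \<le> 1"
  shows "measure_pmf.prob (sel_pmf w v) C =
    (if None \<in> C then 1 - (\<Sum>u\<in>UNIV. w u v) else 0) + (\<Sum>u | Some u \<in> C. w u v)"
proof -
  have "measure_pmf.prob (sel_pmf w v) C = (\<Sum>c\<in>UNIV. if c \<in> C then pmf (sel_pmf w v) c else 0)"
    by (simp add: measure_measure_pmf_finite sum.If_cases)
  also have "\<dots> = (if None \<in> C then 1 - (\<Sum>u\<in>UNIV. w u v) else 0) + (\<Sum>u | Some u \<in> C. w u v)"
    by (simp add: sum_option_UNIV pmf_sel_pmf[where w=w, OF nonneg sub_stochastic] sum.If_cases)
  finally show ?thesis .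
qed

abbreviation uniform01 :: "real measure" where
  "uniform01 \<equiv> uniform_measure lborel {0..1::real}"

lemma emeasure_uniform01:
  assumes "A \<in> sets borel"
  shows "emeasure uniform01 A = emeasure lborel ({0..1} \<inter> A)"
  using assms by (subst emeasure_uniform_measure) (auto simp: divide_ennreal_def)

lemma emeasure_uniform01_UNIV: "emeasure uniform01 UNIV = 1"
proof -
  interpret prob_space uniform01 by (rule prob_space_uniform_measure) auto
  show ?thesis using emeasure_space_1 by simp
qed

lemma emeasure_uniform01_Ioc:
  assumes "0 \<le> x" "x \<le> y" "y \<le> 1"
  shows "emeasure uniform01 {x<..y} = ennreal (y - x)"
proof -
  have "{0..1} \<inter> {x<..y} = {x<..y}" using assms by auto
  then show ?thesis using assms by (simp add: emeasure_uniform01 divide_ennreal_def)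
qed

lemma emeasure_uniform01_Iic:
  assumes "0 \<le> y" "y \<le> 1"
  shows "emeasure uniform01 {..y} = ennreal y"
proof -
  have "{0..1} \<inter> {..y} = {0..y}" using assms by auto
  then show ?thesis using assms by (simp add: emeasure_uniform01 divide_ennreal_def)
qed

lemma emeasure_uniform01_Ioi:
  assumes "0 \<le> x" "x \<le> 1"
  shows "emeasure uniform01 {x<..} = ennreal (1 - x)"
proof -
  have "{0..1} \<inter> {x<..} = {x<..1}" using assms by auto
  then show ?thesis using assms by (simp add: emeasure_uniform01 divide_ennreal_def)
qed

lemma weight_sum_bounds:
  fixes w :: "'v::finite \<Rightarrow> 'v \<Rightarrow> real"
  assumes nonneg: "\<And>u v. w u v \<ge> 0" and sub_stochastic: "\<And>v. (\<Sum>u\<in>UNIV. w u v) \<le> 1"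
  shows "0 \<le> (\<Sum>u\<in>K. w u v)" "(\<Sum>u\<in>K. w u v) \<le> 1"
proof -
  show "0 \<le> (\<Sum>u\<in>K. w u v)" using nonneg by (simp add: sum_nonneg)
  have "(\<Sum>u\<in>K. w u v) \<le> (\<Sum>u\<in>UNIV. w u v)" by (rule sum_mono2) (use nonneg in auto)
  then show "(\<Sum>u\<in>K. w u v) \<le> 1" using sub_stochastic[of v] by simp
qed

lemma finite_weight_split:
  fixes f :: "'v::finite \<Rightarrow> enat"
  shows "(\<Sum>u\<in>UNIV. w u v) = (\<Sum>u | f u < \<infinity>. w u v) + (\<Sum>u | f u = \<infinity>. w u v)"
proof -
  have "f u < \<infinity> \<longleftrightarrow> f u \<noteq> \<infinity>" for u by (cases "f u") auto
  then have "UNIV = {u. f u < \<infinity>} \<union> {u. f u = \<infinity>}" by auto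
  then have "(\<Sum>u\<in>UNIV. w u v) = (\<Sum>u \<in> {u. f u < \<infinity>} \<union> {u. f u = \<infinity>}. w u v)"
    by (simp only:)
  also have "\<dots> = (\<Sum>u | f u < \<infinity>. w u v) + (\<Sum>u | f u = \<infinity>. w u v)"
    by (rule sum.union_disjoint) auto
  finally show ?thesis .
qed

(* For e = t + 2 both equal the
   weight of the nodes at time t + 1, for e = inf both equal one minus the weight of the
   reached nodes. *)
lemma arrival_window_measure:
  fixes w :: "'v::finite \<Rightarrow> 'v \<Rightarrow> real" and f :: "'v \<Rightarrow> enat"
  assumes nonneg: "\<And>u v. w u v \<ge> 0" and sub_stochastic: "\<And>v. (\<Sum>u\<in>UNIV. w u v) \<le> 1"
  shows "emeasure uniform01 (arrival_window (reached_weight w f v) (\<Sum>u | f u < \<infinity>. w u v) e)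
           = ennreal (measure_pmf.prob (sel_pmf w v) (parent_choices f e))"
proof -
  note bounds = weight_sum_bounds[where w=w and v=v, OF nonneg sub_stochastic]
  note prob_sel = measure_sel_pmf[where w=w, OF nonneg sub_stochastic]
  have parent_sum: "(\<Sum>u | Some u \<in> Some ` {u. eSuc (f u) = enat (Suc n)}. w u v)
      = (\<Sum>u | f u = enat n. w u v)" for n
    by (simp add: eSuc_enat_iff image_iff)
  consider "e = enat 0" | "e = enat (Suc 0)" | m where "e = enat (Suc (Suc m))" | "e = \<infinity>"
    by (metis enat.exhaust not0_implies_Suc)
  then show ?thesis
  proof cases
    case 1
    then show ?thesis
      by (simp add: arrival_window_def parent_choices_def emeasure_uniform01_UNIV zero_enat_def)
  next
    case 2
    have "emeasure uniform01 {..reached_weight w f v 0} = ennreal (reached_weight w f v 0)"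
      by (rule emeasure_uniform01_Iic) (simp_all add: reached_weight_def bounds)
    then show ?thesis
      using 2 by (simp add: arrival_window_def parent_choices_def prob_sel parent_sum
          reached_weight_0 zero_enat_def)
  next
    case 3
    have "emeasure uniform01 {reached_weight w f v m<..reached_weight w f v (Suc m)}
        = ennreal (reached_weight w f v (Suc m) - reached_weight w f v m)"
    proof (rule emeasure_uniform01_Ioc)
      show "reached_weight w f v m \<le> reached_weight w f v (Suc m)"
        by (simp add: reached_weight_Suc bounds)
    qed (simp_all add: reached_weight_def bounds)
    then show ?thesis
      using 3 by (simp add: arrival_window_def parent_choices_def prob_sel parent_sum
          reached_weight_Suc zero_enat_def)
  next
    case 4
    have "emeasure uniform01 {(\<Sum>u | f u < \<infinity>. w u v)<..} = ennreal (1 - (\<Sum>u | f u < \<infinity>. w u v))"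
      by (rule emeasure_uniform01_Ioi) (simp_all add: bounds)
    then show ?thesis
      using 4 by (simp add: arrival_window_def parent_choices_def prob_sel eSuc_eq_infinity_iff
          image_iff finite_weight_split[of w v f])
  qed
qed

lemma threshold_window_measure:
  fixes w :: "'v::finite \<Rightarrow> 'v \<Rightarrow> real"
  assumes nonneg: "\<And>u v. w u v \<ge> 0" and sub_stochastic: "\<And>v. (\<Sum>u\<in>UNIV. w u v) \<le> 1"
  shows "emeasure uniform01 (threshold_window w S f v)
           = ennreal (measure_pmf.prob (sel_pmf w v) (parent_window S f v))"
  unfolding threshold_window_def parent_window_def
  using arrival_window_measure[where w=w, OF nonneg sub_stochastic] by simp

lemma threshold_window_borel: "threshold_window w S f v \<in> sets borel"
  unfolding threshold_window_def arrival_window_def by (auto split: enat.split nat.split)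

lemma space_threshold_space: "space (threshold_space :: ('v::finite \<Rightarrow> real) measure) = UNIV"
  unfolding threshold_space_def by (simp add: space_PiM)

lemma prob_space_threshold_space: "prob_space (threshold_space :: ('v::finite \<Rightarrow> real) measure)"
  unfolding threshold_space_def by (intro prob_space_PiM prob_space_uniform_measure) auto

lemma threshold_space_box:
  fixes W :: "'v::finite \<Rightarrow> real set"
  assumes "\<And>v. W v \<in> sets borel"
  shows "Pi UNIV W \<in> sets threshold_space"
    and "emeasure threshold_space (Pi UNIV W) = (\<Prod>v\<in>UNIV. emeasure uniform01 (W v))"
proof -
  interpret product_sigma_finite "\<lambda>_::'v. uniform01"
    by (simp add: product_sigma_finite_def prob_space_imp_sigma_finite prob_space_uniform_measure)
  show "Pi UNIV W \<in> sets threshold_space"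
    unfolding threshold_space_def PiE_UNIV_domain[symmetric]
    by (rule sets_PiM_I_finite) (simp_all add: assms)
  show "emeasure threshold_space (Pi UNIV W) = (\<Prod>v\<in>UNIV. emeasure uniform01 (W v))"
    unfolding threshold_space_def PiE_UNIV_domain[symmetric]
    by (rule emeasure_PiM) (simp_all add: assms)
qed

lemma live_pmf_box:
  "measure_pmf.prob (live_pmf w) {x. \<forall>v. x v \<in> C v} = (\<Prod>v\<in>UNIV. measure_pmf.prob (sel_pmf w v) (C v))"
proof -
  have "{x. \<forall>v. x v \<in> C v} = PiE_dflt UNIV None C" by (auto simp: PiE_dflt_def)
  then show ?thesis unfolding live_pmf_def by (simp add: measure_Pi_pmf_PiE_dflt)
qed

theorem act_time_profile_distribution:
  fixes w :: "'v::finite \<Rightarrow> 'v \<Rightarrow> real"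
  assumes nonneg: "\<And>u v. w u v \<ge> 0" and sub_stochastic: "\<And>v. (\<Sum>u\<in>UNIV. w u v) \<le> 1"
  shows "{\<theta>. (\<lambda>v. act_time w \<theta> S v) = f} \<in> sets threshold_space"
    and "emeasure threshold_space {\<theta>. (\<lambda>v. act_time w \<theta> S v) = f}
           = ennreal (measure_pmf.prob (live_pmf w) {x. (\<lambda>v. live_dist x S v) = f})"
proof -
  have event: "{\<theta>. (\<lambda>v. act_time w \<theta> S v) = f} = Pi UNIV (threshold_window w S f)"
    by (auto simp: act_time_profile_iff[OF nonneg])
  show "{\<theta>. (\<lambda>v. act_time w \<theta> S v) = f} \<in> sets threshold_space"
    unfolding event by (rule threshold_space_box) (rule threshold_window_borel)
  have "emeasure threshold_space {\<theta>. (\<lambda>v. act_time w \<theta> S v) = f}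
      = (\<Prod>v\<in>UNIV. ennreal (measure_pmf.prob (sel_pmf w v) (parent_window S f v)))"
    unfolding event threshold_space_box(2)[OF threshold_window_borel]
    by (simp add: threshold_window_measure[where w=w, OF nonneg sub_stochastic])
  also have "\<dots> = ennreal (measure_pmf.prob (live_pmf w) {x. \<forall>v. x v \<in> parent_window S f v})"
    by (simp add: live_pmf_box prod_ennreal prod_nonneg)
  finally show "emeasure threshold_space {\<theta>. (\<lambda>v. act_time w \<theta> S v) = f}
      = ennreal (measure_pmf.prob (live_pmf w) {x. (\<lambda>v. live_dist x S v) = f})"
    by (simp add: live_dist_profile_iff)
qed

lemma profile_pair_distribution:
  fixes wp wn :: "'v::finite \<Rightarrow> 'v \<Rightarrow> real"
  assumes nonneg_p: "\<And>u v. wp u v \<ge> 0" and sub_stochastic_p: "\<And>v. (\<Sum>u\<in>UNIV. wp u v) \<le> 1"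
    and nonneg_n: "\<And>u v. wn u v \<ge> 0" and sub_stochastic_n: "\<And>v. (\<Sum>u\<in>UNIV. wn u v) \<le> 1"
  shows "(\<lambda>(\<theta>p, \<theta>n). ((\<lambda>v. act_time wp \<theta>p P0 v), (\<lambda>v. act_time wn \<theta>n N0 v)))
           \<in> measurable (threshold_space \<Otimes>\<^sub>M threshold_space) (count_space UNIV)" (is "?H \<in> ?meas")
    and "distr (threshold_space \<Otimes>\<^sub>M threshold_space) (count_space UNIV)
           (\<lambda>(\<theta>p, \<theta>n). ((\<lambda>v. act_time wp \<theta>p P0 v), (\<lambda>v. act_time wn \<theta>n N0 v)))
         = measure_pmf (map_pmf (\<lambda>(xp, xn). ((\<lambda>v. live_dist xp P0 v), (\<lambda>v. live_dist xn N0 v)))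
                          (pair_pmf (live_pmf wp) (live_pmf wn)))" (is "distr ?M _ _ = measure_pmf ?L")
proof -
  interpret T: prob_space "threshold_space :: ('v \<Rightarrow> real) measure"
    by (rule prob_space_threshold_space)
  note positive = act_time_profile_distribution[where w=wp, OF nonneg_p sub_stochastic_p]
  note negative = act_time_profile_distribution[where w=wn, OF nonneg_n sub_stochastic_n]
  have preimage: "?H -` {(fp, fn)} \<inter> space ?M
      = {\<theta>. (\<lambda>v. act_time wp \<theta> P0 v) = fp} \<times> {\<theta>. (\<lambda>v. act_time wn \<theta> N0 v) = fn}" for fp fn
    by (auto simp: space_pair_measure space_threshold_space)
  show measurable: "?H \<in> ?meas"
    by (subst measurable_count_space_eq_countable)
       (auto simp: preimage intro!: pair_measureI positive(1) negative(1))
  show "distr ?M (count_space UNIV) ?H = measure_pmf ?L"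
  proof (rule measure_eqI_countable[where A=UNIV])
    fix a :: "('v \<Rightarrow> enat) \<times> ('v \<Rightarrow> enat)"
    obtain fp fn where a: "a = (fp, fn)" by (cases a)
    have "emeasure (distr ?M (count_space UNIV) ?H) {a} = emeasure ?M (?H -` {a} \<inter> space ?M)"
      by (rule emeasure_distr[OF measurable]) simp
    also have "\<dots> = emeasure threshold_space {\<theta>. (\<lambda>v. act_time wp \<theta> P0 v) = fp}
          * emeasure threshold_space {\<theta>. (\<lambda>v. act_time wn \<theta> N0 v) = fn}"
      unfolding a preimage
      by (rule T.emeasure_pair_measure_Times) (rule positive(1), rule negative(1))
    also have "\<dots> = ennreal (measure_pmf.prob (pair_pmf (live_pmf wp) (live_pmf wn))
          ({x. (\<lambda>v. live_dist x P0 v) = fp} \<times> {x. (\<lambda>v. live_dist x N0 v) = fn}))"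
      by (simp add: positive(2) negative(2) measure_pmf_prob_product ennreal_mult)
    also have "\<dots> = emeasure (measure_pmf ?L) {a}"
      by (auto simp: a emeasure_pmf_single pmf_map vimage_def intro!: arg_cong[where f=ennreal]
          arg_cong[where f="measure_pmf.prob _"])
    finally show "emeasure (distr ?M (count_space UNIV) ?H) {a} = emeasure (measure_pmf ?L) {a}" .
  qed auto
qed

definition competitive_outcome :: "('v \<Rightarrow> enat) \<times> ('v \<Rightarrow> enat) \<Rightarrow> 'v set \<times> 'v set" where
  "competitive_outcome = (\<lambda>(fp, fn). ({v. fp v < \<infinity> \<and> fp v < fn v}, {v. fn v < \<infinity> \<and> fn v \<le> fp v}))"

(* It is
   the image of the profile identity under competitive_outcome. *)
theorem lemma1:
  fixes E :: "('v::finite \<times> 'v) set"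
    and wp wn :: "'v \<Rightarrow> 'v \<Rightarrow> real"
    and P0 N0 :: "'v set"
  assumes "\<And>u v. wp u v \<ge> 0" and "\<And>u v. wn u v \<ge> 0"
    and "\<And>u v. (u, v) \<notin> E \<Longrightarrow> wp u v = 0"
    and "\<And>u v. (u, v) \<notin> E \<Longrightarrow> wn u v = 0"
    and "\<And>v. (\<Sum>u\<in>UNIV. wp u v) \<le> 1"
    and "\<And>v. (\<Sum>u\<in>UNIV. wn u v) \<le> 1"
    and "P0 \<inter> N0 = {}"
  shows "distr (threshold_space \<Otimes>\<^sub>M threshold_space) (count_space UNIV)
            (\<lambda>(\<theta>p, \<theta>n). clt_outcome wp wn P0 N0 \<theta>p \<theta>n)
         = measure_pmf (map_pmf (\<lambda>(xp, xn). live_outcome P0 N0 xp xn)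
                          (pair_pmf (live_pmf wp) (live_pmf wn)))"
proof -
  let ?M = "threshold_space \<Otimes>\<^sub>M threshold_space :: (('v \<Rightarrow> real) \<times> ('v \<Rightarrow> real)) measure"
  let ?H = "\<lambda>(\<theta>p, \<theta>n). ((\<lambda>v. act_time wp \<theta>p P0 v), (\<lambda>v. act_time wn \<theta>n N0 v))"
  let ?K = "\<lambda>(xp, xn). ((\<lambda>v. live_dist xp P0 v), (\<lambda>v. live_dist xn N0 v))"
  let ?p = "pair_pmf (live_pmf wp) (live_pmf wn)"
  note profiles = profile_pair_distribution[where wp=wp and wn=wn, OF assms(1,5,2,6)]
  have "(\<lambda>(\<theta>p, \<theta>n). clt_outcome wp wn P0 N0 \<theta>p \<theta>n) = competitive_outcome \<circ> ?H"
    by (auto simp: competitive_outcome_def clt_outcome_def)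
  then have "distr ?M (count_space UNIV) (\<lambda>(\<theta>p, \<theta>n). clt_outcome wp wn P0 N0 \<theta>p \<theta>n)
      = distr (distr ?M (count_space UNIV) ?H) (count_space UNIV) competitive_outcome"
    using distr_distr[OF _ profiles(1), of competitive_outcome "count_space UNIV"] by simp
  also have "\<dots> = measure_pmf (map_pmf competitive_outcome (map_pmf ?K ?p))"
    by (simp add: profiles(2) map_pmf_rep_eq)
  also have "map_pmf competitive_outcome (map_pmf ?K ?p) = map_pmf (\<lambda>(xp, xn). live_outcome P0 N0 xp xn) ?p"
    by (auto simp: map_pmf_comp competitive_outcome_def live_outcome_def intro!: map_pmf_cong)
  finally show ?thesis .
qed

end
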